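(* Let $\alpha,\beta>0$, $\lambda\in\mathbb{R}$ and $a,b>0$. If $X\sim\mathrm{GIG}(\lambda,a\alpha,b)$ and $Y\sim\mathrm{GIG}(\lambda,b\beta,a)$ are independent and $(U,V)=F^{+,\alpha,\beta}_{\mathrm{GIG}}(X,Y)$, then $U,V$ are independent with $U\sim\mathrm{GIG}(\lambda,b\alpha,a)$ and $V\sim\mathrm{GIG}(\lambda,a\beta,b)$.
   Context: $\mathbb{R}_+=(0,\infty)$. For $\lambda\in\mathbb{R}$ and $A,B>0$, $\mathrm{GIG}(\lambda,A,B)$ is the generalized inverse Gaussian distribution on $\mathbb{R}_+$ with density proportional to $x^{\lambda-1}e^{-Ax-Bx^{-1}}$. $F^{+,\alpha,\beta}_{\mathrm{GIG}}:\mathbb{R}_+^2\to\mathbb{R}_+^2$, $F^{+,\alpha,\beta}_{\mathrm{GIG}}(x,y)=\left(y\frac{1+\beta xy}{1+\alpha xy},\ x\frac{1+\alpha xy}{1+\beta xy}\right)$. *)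

theory Defs
  imports "HOL-Probability.Probability"
begin

definition gig_kernel :: "real \<Rightarrow> real \<Rightarrow> real \<Rightarrow> real \<Rightarrow> real" where
  "gig_kernel lam A B x = (if 0 < x then x powr (lam - 1) * exp (- A * x - B / x) else 0)"

definition gig_const :: "real \<Rightarrow> real \<Rightarrow> real \<Rightarrow> real" where
  "gig_const lam A B = (\<integral>x. gig_kernel lam A B x \<partial>lborel)"

definition gig_density :: "real \<Rightarrow> real \<Rightarrow> real \<Rightarrow> real \<Rightarrow> ennreal" where
  "gig_density lam A B x = ennreal (gig_kernel lam A B x / gig_const lam A B)"

definition F_GIG :: "real \<Rightarrow> real \<Rightarrow> real \<times> real \<Rightarrow> real \<times> real" where
  "F_GIG \<alpha> \<beta> p = (case p of (x, y) \<Rightarrow>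
     (y * (1 + \<beta> * x * y) / (1 + \<alpha> * x * y), x * (1 + \<alpha> * x * y) / (1 + \<beta> * x * y)))"

end

theory Submission
  imports Defs
begin

text \<open>Write \<open>s = x y\<close>. The map \<open>F_GIG\<close> preserves \<open>s\<close>, rescales \<open>x\<close> by a positive factor
  depending only on \<open>s\<close> and swaps the coordinates; since Lebesgue measure on the open quadrant
  is \<open>dx ds / x\<close> and \<open>dx / x\<close> is dilation invariant, \<open>F_GIG\<close> preserves Lebesgue measure
  there. An elementary computation shows that \<open>F_GIG\<close> transforms the product of the two GIG kernels
  of \<open>(X, Y)\<close> into the product of the two GIG kernels claimed for \<open>(U, V)\<close>, so the joint
  density of \<open>(U, V)\<close> is a product of GIG kernels. Since it integrates to \<open>1\<close>, the normalising
  constants match, which yields both the marginal laws and independence.\<close>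

lemma nn_integral_Ioi_scale:
  fixes c :: real and f :: "real \<Rightarrow> ennreal"
  assumes c: "0 < c" and [measurable]: "f \<in> borel_measurable borel"
  shows "(\<integral>\<^sup>+x\<in>{0<..}. f x \<partial>lborel) = ennreal c * (\<integral>\<^sup>+x\<in>{0<..}. f (c * x) \<partial>lborel)"
proof -
  have "indicator {0<..} (c * x) = (indicator {0<..} x :: ennreal)" for x
    using c by (simp add: indicator_def zero_less_mult_iff)
  then show ?thesis
    using nn_integral_real_affine[of "\<lambda>x. f x * indicator {0<..} x" c 0] c by simp
qed

lemma nn_integral_Ioi_inverse_scale:
  fixes c :: real and f :: "real \<Rightarrow> ennreal"
  assumes c: "0 < c" and [measurable]: "f \<in> borel_measurable borel"
  shows "(\<integral>\<^sup>+x\<in>{0<..}. f (c * x) * ennreal (1 / x) \<partial>lborel)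
       = (\<integral>\<^sup>+x\<in>{0<..}. f x * ennreal (1 / x) \<partial>lborel)"
proof -
  have "ennreal c * (f (c * x) * ennreal (1 / (c * x)) * indicator {0<..} x)
      = f (c * x) * ennreal (1 / x) * indicator {0<..} x" for x
  proof (cases "0 < x")
    case True
    then have "ennreal c * ennreal (1 / (c * x)) = ennreal (1 / x)"
      using c by (simp add: ennreal_mult[symmetric])
    then show ?thesis
      by (metis mult.assoc mult.commute)
  qed simp
  then show ?thesis
    using nn_integral_Ioi_scale[OF c, of "\<lambda>x. f x * ennreal (1 / x)"] c
    by (simp add: nn_integral_cmult[symmetric] mult.assoc)
qed

lemma nn_integral_quadrant_hyperbolic:
  fixes H :: "real \<times> real \<Rightarrow> ennreal"
  assumes [measurable]: "H \<in> borel_measurable (lborel \<Otimes>\<^sub>M lborel)"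
  shows "(\<integral>\<^sup>+p\<in>{0<..} \<times> {0<..}. H p \<partial>(lborel \<Otimes>\<^sub>M lborel))
       = (\<integral>\<^sup>+s\<in>{0<..}. (\<integral>\<^sup>+x\<in>{0<..}. H (x, s / x) * ennreal (1 / x) \<partial>lborel) \<partial>lborel)"
proof -
  have "(\<integral>\<^sup>+y. H (x, y) * indicator ({0<..} \<times> {0<..}) (x, y) \<partial>lborel)
      = (\<integral>\<^sup>+y\<in>{0<..}. H (x, y) \<partial>lborel) * indicator {0<..} x" for x
    by (subst nn_integral_multc[symmetric]) (simp_all add: indicator_times mult_ac)
  then have "(\<integral>\<^sup>+p\<in>{0<..} \<times> {0<..}. H p \<partial>(lborel \<Otimes>\<^sub>M lborel))
      = (\<integral>\<^sup>+x\<in>{0<..}. (\<integral>\<^sup>+y\<in>{0<..}. H (x, y) \<partial>lborel) \<partial>lborel)"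
    by (subst lborel.nn_integral_fst[symmetric]) simp_all
  also have "\<dots> = (\<integral>\<^sup>+x\<in>{0<..}. (\<integral>\<^sup>+s\<in>{0<..}. H (x, s / x) * ennreal (1 / x) \<partial>lborel) \<partial>lborel)"
  proof (intro nn_integral_cong)
    fix x :: real
    show "(\<integral>\<^sup>+y\<in>{0<..}. H (x, y) \<partial>lborel) * indicator {0<..} x
        = (\<integral>\<^sup>+s\<in>{0<..}. H (x, s / x) * ennreal (1 / x) \<partial>lborel) * indicator {0<..} x"
      using nn_integral_Ioi_scale[of "1 / x" "\<lambda>y. H (x, y)"]
      by (cases "0 < x") (simp_all add: nn_integral_cmult[symmetric] mult_ac)
  qed
  also have "\<dots> = (\<integral>\<^sup>+x. \<integral>\<^sup>+s. H (x, s / x) * ennreal (1 / x) * indicator {0<..} x * indicator {0<..} s \<partial>lborel \<partial>lborel)"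
    by (intro nn_integral_cong, subst nn_integral_multc[symmetric]) (simp_all add: mult_ac)
  also have "\<dots> = (\<integral>\<^sup>+s. \<integral>\<^sup>+x. H (x, s / x) * ennreal (1 / x) * indicator {0<..} x * indicator {0<..} s \<partial>lborel \<partial>lborel)"
    by (rule lborel_pair.Fubini'[symmetric]) simp
  also have "\<dots> = (\<integral>\<^sup>+s\<in>{0<..}. (\<integral>\<^sup>+x\<in>{0<..}. H (x, s / x) * ennreal (1 / x) \<partial>lborel) \<partial>lborel)"
    by (intro nn_integral_cong, subst nn_integral_multc[symmetric]) (simp_all add: mult_ac)
  finally show ?thesis .
qed

lemma nn_integral_quadrant_hyperbolic_rescale:
  fixes H :: "real \<times> real \<Rightarrow> ennreal" and G :: "real \<Rightarrow> real"
  assumes [measurable]: "H \<in> borel_measurable (lborel \<Otimes>\<^sub>M lborel)" "G \<in> borel_measurable borel"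
    and G_pos: "\<And>s. 0 < s \<Longrightarrow> 0 < G s"
  shows "(\<integral>\<^sup>+p\<in>{0<..} \<times> {0<..}. H (case p of (x, y) \<Rightarrow> (x / G (x * y), y * G (x * y))) \<partial>(lborel \<Otimes>\<^sub>M lborel))
       = (\<integral>\<^sup>+p\<in>{0<..} \<times> {0<..}. H p \<partial>(lborel \<Otimes>\<^sub>M lborel))"
proof -
  have fiber: "(\<integral>\<^sup>+x\<in>{0<..}. H (x / G s, s / x * G s) * ennreal (1 / x) \<partial>lborel)
      = (\<integral>\<^sup>+x\<in>{0<..}. H (x, s / x) * ennreal (1 / x) \<partial>lborel)" if "0 < s" for s
    using G_pos[OF that] nn_integral_Ioi_inverse_scale[of "1 / G s" "\<lambda>x. H (x, s / x)"]
    by simp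
  have "(\<integral>\<^sup>+p\<in>{0<..} \<times> {0<..}. H (case p of (x, y) \<Rightarrow> (x / G (x * y), y * G (x * y))) \<partial>(lborel \<Otimes>\<^sub>M lborel))
      = (\<integral>\<^sup>+s\<in>{0<..}. (\<integral>\<^sup>+x\<in>{0<..}. H (x / G s, s / x * G s) * ennreal (1 / x) \<partial>lborel) \<partial>lborel)"
    by (subst nn_integral_quadrant_hyperbolic) (auto simp: indicator_def intro!: nn_integral_cong)
  also have "\<dots> = (\<integral>\<^sup>+s\<in>{0<..}. (\<integral>\<^sup>+x\<in>{0<..}. H (x, s / x) * ennreal (1 / x) \<partial>lborel) \<partial>lborel)"
    using fiber by (intro nn_integral_cong) (auto simp: indicator_def)
  also have "\<dots> = (\<integral>\<^sup>+p\<in>{0<..} \<times> {0<..}. H p \<partial>(lborel \<Otimes>\<^sub>M lborel))"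
    by (rule nn_integral_quadrant_hyperbolic[symmetric]) fact
  finally show ?thesis .
qed

lemma nn_integral_quadrant_swap:
  fixes H :: "real \<times> real \<Rightarrow> ennreal"
  assumes [measurable]: "H \<in> borel_measurable (lborel \<Otimes>\<^sub>M lborel)"
  shows "(\<integral>\<^sup>+p\<in>{0<..} \<times> {0<..}. H (snd p, fst p) \<partial>(lborel \<Otimes>\<^sub>M lborel))
       = (\<integral>\<^sup>+p\<in>{0<..} \<times> {0<..}. H p \<partial>(lborel \<Otimes>\<^sub>M lborel))"
  by (subst lborel.nn_integral_fst[symmetric], simp, subst lborel_pair.nn_integral_snd[symmetric])
     (simp_all add: indicator_times mult_ac)

lemma measurable_F_GIG[measurable]: "F_GIG \<alpha> \<beta> \<in> lborel \<Otimes>\<^sub>M lborel \<rightarrow>\<^sub>M lborel \<Otimes>\<^sub>M lborel"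
  unfolding F_GIG_def split_beta' by measurable

lemma nn_integral_F_GIG_quadrant:
  fixes H :: "real \<times> real \<Rightarrow> ennreal"
  assumes [measurable]: "H \<in> borel_measurable (lborel \<Otimes>\<^sub>M lborel)" and "0 < \<alpha>" "0 < \<beta>"
  shows "(\<integral>\<^sup>+p\<in>{0<..} \<times> {0<..}. H (F_GIG \<alpha> \<beta> p) \<partial>(lborel \<Otimes>\<^sub>M lborel))
       = (\<integral>\<^sup>+p\<in>{0<..} \<times> {0<..}. H p \<partial>(lborel \<Otimes>\<^sub>M lborel))"
proof -
  define G where "G s = (1 + \<beta> * s) / (1 + \<alpha> * s)" for s :: real
  have "0 < G s" if "0 < s" for s
    using that \<open>0 < \<alpha>\<close> \<open>0 < \<beta>\<close> unfolding G_def by (simp add: add_pos_pos)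
  moreover have "G \<in> borel_measurable borel"
    unfolding G_def by measurable
  moreover have "F_GIG \<alpha> \<beta> p = (case p of (x, y) \<Rightarrow> (y * G (x * y), x / G (x * y)))" for p
    unfolding F_GIG_def G_def by (simp add: mult.assoc split: prod.split)
  ultimately show ?thesis
    using nn_integral_quadrant_hyperbolic_rescale[of "\<lambda>p. H (snd p, fst p)" G]
      nn_integral_quadrant_swap[of H]
    by (simp add: split_beta')
qed

lemma distr_density_F_GIG:
  fixes f g :: "real \<times> real \<Rightarrow> ennreal"
  assumes "0 < \<alpha>" "0 < \<beta>"
    and [measurable]: "f \<in> borel_measurable (lborel \<Otimes>\<^sub>M lborel)" "g \<in> borel_measurable (lborel \<Otimes>\<^sub>M lborel)"
    and f_eq: "\<And>p. f p = g (F_GIG \<alpha> \<beta> p) * indicator ({0<..} \<times> {0<..}) p"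
    and g_vanishes: "\<And>p. p \<notin> {0<..} \<times> {0<..} \<Longrightarrow> g p = 0"
  shows "distr (density (lborel \<Otimes>\<^sub>M lborel) f) (lborel \<Otimes>\<^sub>M lborel) (F_GIG \<alpha> \<beta>)
       = density (lborel \<Otimes>\<^sub>M lborel) g"
proof (rule measure_eqI)
  fix A assume "A \<in> sets (distr (density (lborel \<Otimes>\<^sub>M lborel) f) (lborel \<Otimes>\<^sub>M lborel) (F_GIG \<alpha> \<beta>))"
  then have A[measurable]: "A \<in> sets (lborel \<Otimes>\<^sub>M lborel)"
    by simp
  have "F_GIG \<alpha> \<beta> -` A \<in> sets (lborel \<Otimes>\<^sub>M lborel)"
    using measurable_sets[OF measurable_F_GIG A] by (simp add: space_pair_measure)
  then have "emeasure (distr (density (lborel \<Otimes>\<^sub>M lborel) f) (lborel \<Otimes>\<^sub>M lborel) (F_GIG \<alpha> \<beta>)) A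
      = (\<integral>\<^sup>+p\<in>{0<..} \<times> {0<..}. g (F_GIG \<alpha> \<beta> p) * indicator A (F_GIG \<alpha> \<beta> p) \<partial>(lborel \<Otimes>\<^sub>M lborel))"
    using A by (simp add: emeasure_distr emeasure_density f_eq space_pair_measure mult_ac
                          indicator_vimage[symmetric])
  also have "\<dots> = (\<integral>\<^sup>+p\<in>{0<..} \<times> {0<..}. g p * indicator A p \<partial>(lborel \<Otimes>\<^sub>M lborel))"
    using nn_integral_F_GIG_quadrant[of "\<lambda>p. g p * indicator A p" \<alpha> \<beta>] \<open>0 < \<alpha>\<close> \<open>0 < \<beta>\<close> by simp
  also have "\<dots> = emeasure (density (lborel \<Otimes>\<^sub>M lborel) g) A"
    using A g_vanishes by (subst emeasure_density) (auto simp: indicator_def intro!: nn_integral_cong)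
  finally show "emeasure (distr (density (lborel \<Otimes>\<^sub>M lborel) f) (lborel \<Otimes>\<^sub>M lborel) (F_GIG \<alpha> \<beta>)) A
      = emeasure (density (lborel \<Otimes>\<^sub>M lborel) g) A" .
qed simp

lemma distributed_F_GIG:
  fixes f g :: "real \<times> real \<Rightarrow> ennreal"
  assumes "0 < \<alpha>" "0 < \<beta>"
    and Z: "distributed M (lborel \<Otimes>\<^sub>M lborel) Z f"
    and g[measurable]: "g \<in> borel_measurable (lborel \<Otimes>\<^sub>M lborel)"
    and "\<And>p. f p = g (F_GIG \<alpha> \<beta> p) * indicator ({0<..} \<times> {0<..}) p"
    and "\<And>p. p \<notin> {0<..} \<times> {0<..} \<Longrightarrow> g p = 0"
  shows "distributed M (lborel \<Otimes>\<^sub>M lborel) (\<lambda>\<omega>. F_GIG \<alpha> \<beta> (Z \<omega>)) g"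
proof -
  have [measurable]: "Z \<in> M \<rightarrow>\<^sub>M lborel \<Otimes>\<^sub>M lborel" "f \<in> borel_measurable (lborel \<Otimes>\<^sub>M lborel)"
    using Z by (simp_all add: distributed_def)
  have "distr M (lborel \<Otimes>\<^sub>M lborel) (\<lambda>\<omega>. F_GIG \<alpha> \<beta> (Z \<omega>))
      = distr (distr M (lborel \<Otimes>\<^sub>M lborel) Z) (lborel \<Otimes>\<^sub>M lborel) (F_GIG \<alpha> \<beta>)"
    by (subst distr_distr) (auto simp: comp_def)
  also have "\<dots> = density (lborel \<Otimes>\<^sub>M lborel) g"
    unfolding distributed_distr_eq_density[OF Z] by (rule distr_density_F_GIG) (use assms in auto)
  finally show ?thesis
    using Z g by (simp add: distributed_def)
qed

lemma (in prob_space) prob_space_density_if_distributed: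
  "distributed M N Z f \<Longrightarrow> prob_space (density N f)"
  unfolding distributed_distr_eq_density[symmetric] by (rule prob_space_distr) (simp add: distributed_def)

lemma (in prob_space) indep_var_if_distributed_product_density:
  assumes S: "sigma_finite_measure S" and T: "sigma_finite_measure T"
    and joint: "distributed M (S \<Otimes>\<^sub>M T) (\<lambda>\<omega>. (U \<omega>, V \<omega>)) (\<lambda>(u, v). P u * Q v)"
    and P: "prob_space (density S P)" and Q: "prob_space (density T Q)"
    and [measurable]: "P \<in> borel_measurable S" "Q \<in> borel_measurable T"
  shows "indep_var S U T V \<and> distributed M S U P \<and> distributed M T V Q"
proof (intro conjI)
  have "(\<integral>\<^sup>+v. P u * Q v \<partial>T) = P u" for u
    using prob_space.emeasure_space_1[OF Q] by (simp add: nn_integral_cmult emeasure_density)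
  then show U: "distributed M S U P"
    using distr_marginal1[OF S T joint] by simp
  have "(\<integral>\<^sup>+u. P u * Q v \<partial>S) = Q v" for v
    using prob_space.emeasure_space_1[OF P] by (simp add: nn_integral_multc emeasure_density)
  then show V: "distributed M T V Q"
    using distr_marginal2[OF S T joint] by simp
  have "distr M S U \<Otimes>\<^sub>M distr M T V = density S P \<Otimes>\<^sub>M density T Q"
    using U V by (simp add: distributed_distr_eq_density)
  also have "\<dots> = distr M (S \<Otimes>\<^sub>M T) (\<lambda>\<omega>. (U \<omega>, V \<omega>))"
    using joint T prob_space_imp_sigma_finite[OF Q]
    by (simp add: distributed_distr_eq_density pair_measure_density)
  finally show "indep_var S U T V"
    using U V by (simp add: indep_var_distribution_eq distributed_measurable)
qed

lemma (in prob_space) indep_var_lborel_iff: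
  fixes U V :: "'a \<Rightarrow> real"
  shows "indep_var lborel U lborel V \<longleftrightarrow> indep_var borel U borel V"
  unfolding indep_var_def indep_vars_def by (simp add: case_bool_if)

lemma gig_kernel_nonneg: "0 \<le> gig_kernel lam A B x"
  unfolding gig_kernel_def by auto

lemma gig_kernel_nonpos_eq_0: "x \<le> 0 \<Longrightarrow> gig_kernel lam A B x = 0"
  unfolding gig_kernel_def by auto

lemma borel_measurable_gig_kernel[measurable]: "gig_kernel lam A B \<in> borel_measurable borel"
  unfolding gig_kernel_def by measurable

lemma borel_measurable_gig_density[measurable]: "gig_density lam A B \<in> borel_measurable borel"
  unfolding gig_density_def by measurable

lemma gig_const_eq_nn_integral:
  "gig_const lam A B = enn2real (\<integral>\<^sup>+x. ennreal (gig_kernel lam A B x) \<partial>lborel)"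
  unfolding gig_const_def by (rule integral_eq_nn_integral) (auto simp: gig_kernel_nonneg)

lemma gig_const_pos_iff:
  "0 < gig_const lam A B \<longleftrightarrow>
     (\<integral>\<^sup>+x. ennreal (gig_kernel lam A B x) \<partial>lborel) \<noteq> 0 \<and> (\<integral>\<^sup>+x. ennreal (gig_kernel lam A B x) \<partial>lborel) \<noteq> \<infinity>"
  unfolding gig_const_eq_nn_integral enn2real_positive_iff by (auto simp: less_top zero_less_iff_neq_zero)

lemma nn_integral_gig_kernel:
  "0 < gig_const lam A B \<Longrightarrow> (\<integral>\<^sup>+x. ennreal (gig_kernel lam A B x) \<partial>lborel) = ennreal (gig_const lam A B)"
  unfolding gig_const_pos_iff by (simp add: gig_const_eq_nn_integral less_top)

lemma prob_space_gig_iff: "prob_space (density lborel (gig_density lam A B)) \<longleftrightarrow> 0 < gig_const lam A B"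
proof
  assume "prob_space (density lborel (gig_density lam A B))"
  then have "(\<integral>\<^sup>+x. gig_density lam A B x \<partial>lborel) = 1"
    using prob_space.emeasure_space_1 by (force simp: emeasure_density)
  moreover have "gig_density lam A B = (\<lambda>_. 0)" if "gig_const lam A B \<le> 0"
    using that by (intro ext) (simp add: gig_density_def ennreal_neg divide_nonneg_nonpos gig_kernel_nonneg)
  ultimately show "0 < gig_const lam A B"
    by force
next
  assume C: "0 < gig_const lam A B"
  have "(\<integral>\<^sup>+x. gig_density lam A B x \<partial>lborel)
      = ennreal (1 / gig_const lam A B) * (\<integral>\<^sup>+x. ennreal (gig_kernel lam A B x) \<partial>lborel)"
    unfolding gig_density_def using C
    by (subst nn_integral_cmult[symmetric]) (auto simp: ennreal_mult[symmetric] gig_kernel_nonneg)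
  also have "\<dots> = 1"
    using C by (simp add: nn_integral_gig_kernel ennreal_mult[symmetric])
  finally show "prob_space (density lborel (gig_density lam A B))"
    by (intro prob_spaceI) (simp add: emeasure_density)
qed

lemma gig_kernel_product_density:
  fixes lam A B lam' A' B' D :: real
  defines "J \<equiv> \<integral>\<^sup>+x. ennreal (gig_kernel lam A B x) \<partial>lborel"
    and "J' \<equiv> \<integral>\<^sup>+x. ennreal (gig_kernel lam' A' B' x) \<partial>lborel"
  assumes D: "0 < D"
    and one: "integral\<^sup>N (lborel \<Otimes>\<^sub>M lborel)
                (\<lambda>(u, v). ennreal (gig_kernel lam A B u * gig_kernel lam' A' B' v / D)) = 1"
  shows "0 < gig_const lam A B" and "0 < gig_const lam' A' B'"
    and "(\<lambda>(u, v). ennreal (gig_kernel lam A B u * gig_kernel lam' A' B' v / D))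
         = (\<lambda>(u, v). gig_density lam A B u * gig_density lam' A' B' v)"
proof -
  have "J * J' = (\<integral>\<^sup>+u. \<integral>\<^sup>+v. ennreal (gig_kernel lam A B u) * ennreal (gig_kernel lam' A' B' v) \<partial>lborel \<partial>lborel)"
    unfolding J_def J'_def by (simp add: nn_integral_cmult nn_integral_multc)
  also have "\<dots> = (\<integral>\<^sup>+u. \<integral>\<^sup>+v. ennreal D * ennreal (gig_kernel lam A B u * gig_kernel lam' A' B' v / D) \<partial>lborel \<partial>lborel)"
    using D by (simp add: ennreal_mult[symmetric] gig_kernel_nonneg)
  also have "\<dots> = ennreal D * (\<integral>\<^sup>+u. \<integral>\<^sup>+v. ennreal (gig_kernel lam A B u * gig_kernel lam' A' B' v / D) \<partial>lborel \<partial>lborel)"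
    by (simp add: nn_integral_cmult)
  also have "\<dots> = ennreal D"
    using one by (subst (asm) lborel.nn_integral_fst[symmetric]) simp_all
  finally have JJ': "J * J' = ennreal D" .
  with D have "J \<noteq> 0" "J' \<noteq> 0"
    by auto
  moreover from JJ' this have "J \<noteq> \<infinity>" "J' \<noteq> \<infinity>"
    by (auto simp: ennreal_mult_eq_top_iff)
  ultimately
  show C: "0 < gig_const lam A B" "0 < gig_const lam' A' B'"
    unfolding J_def J'_def gig_const_pos_iff by simp_all
  with JJ' D have "gig_const lam A B * gig_const lam' A' B' = D"
    unfolding J_def J'_def by (simp add: nn_integral_gig_kernel ennreal_mult[symmetric])
  with C show "(\<lambda>(u, v). ennreal (gig_kernel lam A B u * gig_kernel lam' A' B' v / D))
         = (\<lambda>(u, v). gig_density lam A B u * gig_density lam' A' B' v)"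
    by (auto simp: gig_density_def ennreal_mult[symmetric] gig_kernel_nonneg)
qed

lemma gig_kernel_mult_F_GIG:
  fixes x y u v :: real
  assumes "0 < x" "0 < y" "0 < \<alpha>" "0 < \<beta>" and F: "F_GIG \<alpha> \<beta> (x, y) = (u, v)"
  shows "gig_kernel lam (a * \<alpha>) b x * gig_kernel lam (b * \<beta>) a y
       = gig_kernel lam (b * \<alpha>) a u * gig_kernel lam (a * \<beta>) b v"
proof -
  define A where "A = 1 + \<alpha> * x * y"
  define B where "B = 1 + \<beta> * x * y"
  have "0 < A" "0 < B"
    using assms unfolding A_def B_def by (simp_all add: add_pos_pos)
  have u: "u = y * B / A" and v: "v = x * A / B"
    using F unfolding F_GIG_def A_def B_def by auto
  have "0 < u" "0 < v"
    using \<open>0 < A\<close> \<open>0 < B\<close> assms unfolding u v by simp_all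
  have "u * v = x * y"
    using \<open>0 < A\<close> \<open>0 < B\<close> unfolding u v by simp
  then have powr: "u powr (lam - 1) * v powr (lam - 1) = x powr (lam - 1) * y powr (lam - 1)"
    using \<open>0 < u\<close> \<open>0 < v\<close> assms by (simp add: powr_mult[symmetric])
  have "\<beta> * v + 1 / u = A * (1 + \<beta> * x * y) / (y * B)" and "\<alpha> * u + 1 / v = B * (1 + \<alpha> * x * y) / (x * A)"
    using \<open>0 < A\<close> \<open>0 < B\<close> assms unfolding u v by (simp_all add: field_simps)
  then have "\<beta> * v + 1 / u = A / y" and "\<alpha> * u + 1 / v = B / x"
    using \<open>0 < A\<close> \<open>0 < B\<close> unfolding A_def[symmetric] B_def[symmetric] by simp_all
  moreover have "A / y = \<alpha> * x + 1 / y" and "B / x = \<beta> * y + 1 / x"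
    using assms unfolding A_def B_def by (simp_all add: field_simps)
  ultimately have "a * (\<beta> * v + 1 / u) + b * (\<alpha> * u + 1 / v) = a * (\<alpha> * x + 1 / y) + b * (\<beta> * y + 1 / x)"
    by simp
  then have "- (b * \<alpha>) * u - a / u + (- (a * \<beta>) * v - b / v)
      = - (a * \<alpha>) * x - b / x + (- (b * \<beta>) * y - a / y)"
    by (simp add: algebra_simps)
  with powr show ?thesis
    using \<open>0 < u\<close> \<open>0 < v\<close> assms by (simp add: gig_kernel_def mult_ac exp_add[symmetric])
qed

lemma gig_density_mult_F_GIG:
  fixes x y u v :: real
  assumes "0 < \<alpha>" "0 < \<beta>" and C: "0 < gig_const lam (a * \<alpha>) b" "0 < gig_const lam (b * \<beta>) a"
    and F: "F_GIG \<alpha> \<beta> (x, y) = (u, v)"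
  shows "gig_density lam (a * \<alpha>) b x * gig_density lam (b * \<beta>) a y
       = ennreal (gig_kernel lam (b * \<alpha>) a u * gig_kernel lam (a * \<beta>) b v
                  / (gig_const lam (a * \<alpha>) b * gig_const lam (b * \<beta>) a))
         * indicator ({0<..} \<times> {0<..}) (x, y)"
proof (cases "0 < x \<and> 0 < y")
  case True
  then have "gig_kernel lam (a * \<alpha>) b x * gig_kernel lam (b * \<beta>) a y
      = gig_kernel lam (b * \<alpha>) a u * gig_kernel lam (a * \<beta>) b v"
    using gig_kernel_mult_F_GIG[OF _ _ \<open>0 < \<alpha>\<close> \<open>0 < \<beta>\<close> F] by blast
  with True C show ?thesis
    by (simp add: gig_density_def ennreal_mult[symmetric] gig_kernel_nonneg)
next
  case False
  then show ?thesis
    by (auto simp: gig_density_def gig_kernel_nonpos_eq_0)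
qed

theorem corollary5p2:
  fixes M :: "'a measure" and X Y :: "'a \<Rightarrow> real"
    and \<alpha> \<beta> lam a b :: real
  assumes "prob_space M"
    and "\<alpha> > 0" and "\<beta> > 0" and "a > 0" and "b > 0"
    and "distributed M lborel X (gig_density lam (a * \<alpha>) b)"
    and "distributed M lborel Y (gig_density lam (b * \<beta>) a)"
    and "prob_space.indep_var M borel X borel Y"
  shows "prob_space.indep_var M borel (\<lambda>\<omega>. fst (F_GIG \<alpha> \<beta> (X \<omega>, Y \<omega>)))
                               borel (\<lambda>\<omega>. snd (F_GIG \<alpha> \<beta> (X \<omega>, Y \<omega>)))
       \<and> distributed M lborel (\<lambda>\<omega>. fst (F_GIG \<alpha> \<beta> (X \<omega>, Y \<omega>))) (gig_density lam (b * \<alpha>) a)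
       \<and> distributed M lborel (\<lambda>\<omega>. snd (F_GIG \<alpha> \<beta> (X \<omega>, Y \<omega>))) (gig_density lam (a * \<beta>) b)"
proof -
  interpret prob_space M by fact
  have C: "0 < gig_const lam (a * \<alpha>) b" "0 < gig_const lam (b * \<beta>) a"
    using assms(6,7) by (simp_all add: prob_space_density_if_distributed flip: prob_space_gig_iff)
  define g where "g = (\<lambda>(u, v). ennreal (gig_kernel lam (b * \<alpha>) a u * gig_kernel lam (a * \<beta>) b v
                          / (gig_const lam (a * \<alpha>) b * gig_const lam (b * \<beta>) a)))"
  have "distributed M (lborel \<Otimes>\<^sub>M lborel) (\<lambda>\<omega>. (X \<omega>, Y \<omega>))
      (\<lambda>(x, y). gig_density lam (a * \<alpha>) b x * gig_density lam (b * \<beta>) a y)"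
    using assms(6-8) lborel.sigma_finite_measure_axioms
    by (intro distributed_joint_indep) (simp_all add: indep_var_lborel_iff)
  then have UV: "distributed M (lborel \<Otimes>\<^sub>M lborel) (\<lambda>\<omega>. F_GIG \<alpha> \<beta> (X \<omega>, Y \<omega>)) g"
    by (rule distributed_F_GIG[OF \<open>0 < \<alpha>\<close> \<open>0 < \<beta>\<close>])
       (auto simp: g_def gig_density_mult_F_GIG[OF \<open>0 < \<alpha>\<close> \<open>0 < \<beta>\<close> C] gig_kernel_def
             split: prod.split)
  have "integral\<^sup>N (lborel \<Otimes>\<^sub>M lborel) g = 1"
    using distributed_nn_integral[OF UV, of "\<lambda>_. 1"] by (simp add: emeasure_space_1)
  note g_eq = gig_kernel_product_density[OF mult_pos_pos[OF C] this[unfolded g_def]]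
  have "distributed M (lborel \<Otimes>\<^sub>M lborel)
      (\<lambda>\<omega>. (fst (F_GIG \<alpha> \<beta> (X \<omega>, Y \<omega>)), snd (F_GIG \<alpha> \<beta> (X \<omega>, Y \<omega>))))
      (\<lambda>(u, v). gig_density lam (b * \<alpha>) a u * gig_density lam (a * \<beta>) b v)"
    using UV by (simp add: g_def g_eq(3))
  from indep_var_if_distributed_product_density[OF _ _ this] g_eq(1,2) show ?thesis
    by (simp add: prob_space_gig_iff indep_var_lborel_iff lborel.sigma_finite_measure_axioms)
qed

end
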